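(* Let $G_1,\dots,G_m$ be finite subgraphs of $\mathsf{Path}_{\mathbb Z}$, let $I\subseteq[m]$ with $m\in I$, let $\sigma=\sigma_I$, and let $j\in[m]$. Then \[\vec\Delta(G_{\tilde\sigma_j(1)},\dots,G_{\tilde\sigma_j(m)})\ \ge\ \sum_{i\in I}\Delta(G_i\ominus(G_1\cup\dots\cup G_{i-1})).\]
   Context: Graphs are finite simple graphs without isolated vertices; $\emptyset$ is the empty graph. $\mathsf{Path}_{\mathbb Z}$ has vertex set $\mathbb Z$ and edges $\{i-1,i\}$. $\Delta(G)$ is the number of connected components of $G$; $G\ominus F$ is the union of components of $G$ sharing no vertex with $F$; $\vec\Delta(H_1,\dots,H_m)=\sum_{l=1}^m\Delta(H_l\ominus(H_1\cup\dots\cup H_{l-1}))$. For $I\subseteq[m]$ with $m\in I$, write $I=\{i_1<\dots<i_p\}$ and $i_0:=0$; the permutation $\sigma_I$ of $[m]$ is $\sigma_I(j)=i_h$ if $j=i_{h-1}+1$ for some $h\in[p]$, and $\sigma_I(j)=j-1$ otherwise. For $\sigma=\sigma_I$ and $j\in[m]$, $\tilde\sigma_j:=\sigma_{\tilde I_j}$ where $\tilde I_j=I\cup[i_{h-1}]$ if $j=i_h\in I$, and $\tilde I_j=I\cup[j-1]$ if $j\notin I$ (here $[r]=\{1,\dots,r\}$, $[0]=\emptyset$). *)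

theory Defs
  imports Main
begin

(* A graph without isolated vertices is represented by its edge set;
   each edge is a 2-element set of vertices. *)
type_synonym graph = "int set set"

definition path_subgraph :: "graph \<Rightarrow> bool" where
  "path_subgraph E \<longleftrightarrow> finite E \<and> (\<forall>e\<in>E. \<exists>i::int. e = {i - 1, i})"

definition verts :: "graph \<Rightarrow> int set" where
  "verts E = \<Union> E"

definition adj :: "graph \<Rightarrow> int \<Rightarrow> int \<Rightarrow> bool" where
  "adj E u v \<longleftrightarrow> {u, v} \<in> E \<and> u \<noteq> v"

definition comps :: "graph \<Rightarrow> int set set" where
  "comps E = {{v. (adj E)\<^sup>*\<^sup>* u v} | u. u \<in> verts E}"

definition ncomp :: "graph \<Rightarrow> nat" where
  "ncomp E = card (comps E)"

definition ominus :: "graph \<Rightarrow> graph \<Rightarrow> graph" where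
  "ominus G F = {e \<in> G. \<exists>C\<in>comps G. e \<subseteq> C \<and> C \<inter> verts F = {}}"

(* vec-Delta of a list H_1..H_m (list position l-1 holds H_l) *)
definition vecDelta :: "graph list \<Rightarrow> nat" where
  "vecDelta Hs = (\<Sum>l<length Hs. ncomp (ominus (Hs ! l) (\<Union>k\<in>{..<l}. Hs ! k)))"

(* i_h for I = {i_1 < ... < i_p}, with i_0 = 0 *)
definition ix :: "nat set \<Rightarrow> nat \<Rightarrow> nat" where
  "ix I h = (if h = 0 then 0 else sorted_list_of_set I ! (h - 1))"

definition sigmaI :: "nat set \<Rightarrow> nat \<Rightarrow> nat" where
  "sigmaI I j =
     (if \<exists>h. 1 \<le> h \<and> h \<le> card I \<and> j = ix I (h - 1) + 1
      then ix I (THE h. 1 \<le> h \<and> h \<le> card I \<and> j = ix I (h - 1) + 1)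
      else j - 1)"

definition tildeI :: "nat set \<Rightarrow> nat \<Rightarrow> nat set" where
  "tildeI I j =
     (if j \<in> I
      then I \<union> {1..ix I ((THE h. 1 \<le> h \<and> h \<le> card I \<and> ix I h = j) - 1)}
      else I \<union> {1..<j})"

end

theory Submission
  imports Defs
begin

text \<open>For such a set \<open>J\<close>
  and \<open>i \<in> J\<close>, let \<open>l\<close> be the predecessor of \<open>i\<close> in \<open>J \<union> {0}\<close>. Then \<open>\<sigma>\<^sub>J(l + 1) = i\<close>, and
  \<open>\<sigma>\<^sub>J\<close> maps \<open>{1..l}\<close> into itself. So in the reordered sequence, \<open>G\<^sub>i\<close> appears at
  position \<open>l + 1\<close>, and everything before it lies in \<open>G\<^sub>1 \<union> \<dots> \<union> G\<^sub>i\<^sub>-\<^sub>1\<close>. Removing the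
  components that meet a larger graph leaves fewer components, so the \<open>(l + 1)\<close>-th summand
  on the left is at least the \<open>i\<close>-th summand on the right. Distinct \<open>i\<close> occupy distinct
  positions.\<close>

lemma symp_adj: "symp (adj E)"
  unfolding adj_def by (auto intro: sympI simp: insert_commute)

lemma reachable_set_eq:
  assumes "(adj E)\<^sup>*\<^sup>* u v"
  shows "{x. (adj E)\<^sup>*\<^sup>* u x} = {x. (adj E)\<^sup>*\<^sup>* v x}"
  using assms sympD[OF symp_rtranclp[OF symp_adj]] by (auto intro: rtranclp_trans)

lemma rtranclp_adj_mono: "H \<subseteq> G \<Longrightarrow> (adj H)\<^sup>*\<^sup>* u v \<Longrightarrow> (adj G)\<^sup>*\<^sup>* u v"
  by (erule rtranclp_mono[THEN predicate2D, rotated]) (auto simp: adj_def)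

lemma ominus_subset: "ominus G F \<subseteq> G"
  unfolding ominus_def by auto

lemma rtranclp_adj_ominus_iff:
  assumes u: "u \<in> verts G" and disj: "{x. (adj G)\<^sup>*\<^sup>* u x} \<inter> verts F = {}"
  shows "(adj (ominus G F))\<^sup>*\<^sup>* u v \<longleftrightarrow> (adj G)\<^sup>*\<^sup>* u v"
proof
  show "(adj (ominus G F))\<^sup>*\<^sup>* u v \<Longrightarrow> (adj G)\<^sup>*\<^sup>* u v"
    by (rule rtranclp_adj_mono[OF ominus_subset])
next
  assume "(adj G)\<^sup>*\<^sup>* u v"
  then show "(adj (ominus G F))\<^sup>*\<^sup>* u v"
  proof (induction rule: rtranclp_induct)
    case base
    then show ?case by simp
  next
    case (step a b)
    let ?C = "{x. (adj G)\<^sup>*\<^sup>* u x}"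
    have "?C \<in> comps G" using u unfolding comps_def by blast
    moreover have "{a, b} \<subseteq> ?C" using step.hyps by (auto intro: rtranclp.rtrancl_into_rtrancl)
    moreover have "{a, b} \<in> G" "a \<noteq> b" using step.hyps(2) by (auto simp: adj_def)
    ultimately have "{a, b} \<in> ominus G F" "a \<noteq> b" using disj unfolding ominus_def by blast+
    then have "adj (ominus G F) a b" by (simp add: adj_def)
    with step.IH show ?case by (rule rtranclp.rtrancl_into_rtrancl)
  qed
qed

lemma edge_subset_reachable:
  assumes "\<forall>e\<in>G. card e = 2" "e \<in> G" "w \<in> e"
  shows "e \<subseteq> {v. (adj G)\<^sup>*\<^sup>* w v}"
proof -
  obtain x where "e = {w, x}" "w \<noteq> x"
    using assms by (metis card_2_iff insert_commute insertE singletonD)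
  then have "adj G w x" using assms(2) by (simp add: adj_def)
  then show ?thesis using \<open>e = {w, x}\<close> by auto
qed

lemma comps_ominus:
  assumes "\<forall>e\<in>G. card e = 2"
  shows "comps (ominus G F) = {C \<in> comps G. C \<inter> verts F = {}}"
proof (intro equalityI subsetI)
  fix C' assume "C' \<in> comps (ominus G F)"
  then obtain u e where C': "C' = {v. (adj (ominus G F))\<^sup>*\<^sup>* u v}"
    and "u \<in> e" "e \<in> ominus G F"
    unfolding comps_def verts_def by blast
  then obtain C where C: "C \<in> comps G" "u \<in> C" "C \<inter> verts F = {}" and "u \<in> verts G"
    unfolding ominus_def verts_def by blast
  then have "C = {v. (adj G)\<^sup>*\<^sup>* u v}"
    unfolding comps_def using reachable_set_eq by blast
  with C C' \<open>u \<in> verts G\<close> show "C' \<in> {C \<in> comps G. C \<inter> verts F = {}}"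
    using rtranclp_adj_ominus_iff by auto
next
  fix C assume C: "C \<in> {C \<in> comps G. C \<inter> verts F = {}}"
  then obtain w e where w: "w \<in> verts G" "C = {v. (adj G)\<^sup>*\<^sup>* w v}" and "w \<in> e" "e \<in> G"
    unfolding comps_def verts_def by blast
  then have "e \<in> ominus G F"
    using C edge_subset_reachable[OF assms] unfolding ominus_def by blast
  then have "w \<in> verts (ominus G F)" using \<open>w \<in> e\<close> unfolding verts_def by blast
  moreover have "C = {v. (adj (ominus G F))\<^sup>*\<^sup>* w v}"
    using w C rtranclp_adj_ominus_iff by auto
  ultimately show "C \<in> comps (ominus G F)" unfolding comps_def by blast
qed

lemma finite_comps:
  assumes "finite G" "\<forall>e\<in>G. card e = 2"
  shows "finite (comps G)"
proof -
  have "finite (verts G)"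
    using assms unfolding verts_def by (metis card.infinite finite_Union zero_neq_numeral)
  moreover have "comps G = (\<lambda>u. {v. (adj G)\<^sup>*\<^sup>* u v}) ` verts G" unfolding comps_def by blast
  ultimately show ?thesis by simp
qed

lemma ncomp_ominus_antimono:
  assumes "finite G" "\<forall>e\<in>G. card e = 2" "F' \<subseteq> F"
  shows "ncomp (ominus G F) \<le> ncomp (ominus G F')"
proof -
  have "verts F' \<subseteq> verts F" using assms(3) unfolding verts_def by blast
  then show ?thesis
    unfolding ncomp_def comps_ominus[OF assms(2)]
    by (intro card_mono) (auto simp: finite_comps[OF assms(1,2)])
qed

lemma
  assumes "path_subgraph G"
  shows path_subgraph_finite: "finite G"
    and path_subgraph_card_edge: "\<forall>e\<in>G. card e = 2"
  using assms unfolding path_subgraph_def by auto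

lemma strict_mono_on_ix:
  assumes "finite J" "0 \<notin> J"
  shows "strict_mono_on {..card J} (ix J)"
proof (rule strict_mono_onI)
  fix a b assume "a \<in> {..card J}" "b \<in> {..card J}" "a < b"
  then have b: "b - 1 < length (sorted_list_of_set J)" "0 < b" by auto
  show "ix J a < ix J b"
  proof (cases "a = 0")
    case True
    have "ix J b \<in> J" using nth_mem[OF b(1)] assms(1) b(2) by (simp add: ix_def)
    then show ?thesis using True assms(2) by (auto simp: ix_def intro: gr0I)
  next
    case False
    have "sorted_list_of_set J ! (a - 1) < sorted_list_of_set J ! (b - 1)"
      by (rule sorted_wrt_nth_less[OF strict_sorted_list_of_set]) (use b \<open>a < b\<close> False in auto)
    then show ?thesis using False b(2) by (simp add: ix_def)
  qed
qed

lemma ix_image: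
  assumes "finite J"
  shows "ix J ` {1..card J} = J"
proof -
  have "ix J ` {1..card J} = (\<lambda>h. sorted_list_of_set J ! h) ` {..<card J}"
    by (force simp: ix_def image_iff intro: bexI[of _ "Suc _"])
  also have "\<dots> = set (sorted_list_of_set J)"
    by (auto simp: set_conv_nth)
  also have "\<dots> = J"
    using assms by simp
  finally show ?thesis .
qed

lemma sigmaI_ix_Suc:
  assumes "finite J" "0 \<notin> J" "h < card J"
  shows "sigmaI J (ix J h + 1) = ix J (h + 1)"
proof -
  let ?P = "\<lambda>h'. 1 \<le> h' \<and> h' \<le> card J \<and> ix J h + 1 = ix J (h' - 1) + 1"
  have P: "?P (h + 1)" using assms(3) by simp
  have "(THE h'. ?P h') = h + 1"
  proof (rule the_equality)
    fix h' assume h': "?P h'"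
    then have "h' - 1 \<in> {..card J}" "ix J h = ix J (h' - 1)" by auto
    then have "h' - 1 = h"
      using strict_mono_on_eqD[OF strict_mono_on_ix[OF assms(1,2)]] assms(3) by simp
    then show "h' = h + 1" using h' by linarith
  qed (rule P)
  moreover have "\<exists>h'. ?P h'" using P by blast
  ultimately show ?thesis by (simp only: sigmaI_def if_True)
qed

lemma sigmaI_maps_initial_segment:
  assumes J: "finite J" "0 \<notin> J" and p: "p \<in> J" and k: "k \<in> {1..p}"
  shows "sigmaI J k \<in> {1..p}"
proof (cases "\<exists>h. 1 \<le> h \<and> h \<le> card J \<and> k = ix J (h - 1) + 1")
  case True
  then obtain h where h: "h \<in> {1..card J}" "k = Suc (ix J (h - 1))" by auto
  have mono: "strict_mono_on {..card J} (ix J)" using strict_mono_on_ix[OF J] .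
  obtain q where q: "q \<in> {1..card J}" "p = ix J q" using p ix_image[OF J(1)] by force
  have "h \<le> q"
  proof (rule ccontr)
    assume "\<not> h \<le> q"
    then have "ix J q \<le> ix J (h - 1)" using q h by (intro strict_mono_on_leD[OF mono]) auto
    then show False using h q k by auto
  qed
  then have "ix J h \<le> p" using q h by (auto intro: strict_mono_on_leD[OF mono])
  moreover have "ix J h \<noteq> 0" using h ix_image[OF J(1)] J(2) by force
  moreover have "sigmaI J k = ix J h" using sigmaI_ix_Suc[OF J, of "h - 1"] h by auto
  ultimately show ?thesis by simp
next
  case False
  have "card J \<ge> 1" using J(1) p by (auto simp: Suc_le_eq card_gt_0_iff)
  then have "k \<noteq> 1" using False by (auto simp: ix_def)
  moreover have "sigmaI J k = k - 1" using False unfolding sigmaI_def by argo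
  ultimately show ?thesis using k by auto
qed

lemma sigmaI_predecessor:
  assumes J: "finite J" "0 \<notin> J" and i: "i \<in> J"
  obtains l where "l < i" "sigmaI J (Suc l) = i" "sigmaI J ` {1..l} \<subseteq> {1..<i}"
proof -
  obtain q where q: "q \<in> {1..card J}" "i = ix J q" using i ix_image[OF J(1)] by force
  define l where "l = ix J (q - 1)"
  have "l < i"
    using q strict_mono_onD[OF strict_mono_on_ix[OF J], of "q - 1" q] by (auto simp: l_def)
  moreover have "q - 1 < card J" "q - 1 + 1 = q" using q by auto
  then have "sigmaI J (Suc l) = i"
    using q(2) sigmaI_ix_Suc[OF J, of "q - 1"] by (simp add: l_def)
  moreover have "sigmaI J ` {1..l} \<subseteq> {1..l}"
  proof (cases "q = 1")
    case True
    then show ?thesis by (simp add: l_def ix_def)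
  next
    case False
    then have "l \<in> J" using q ix_image[OF J(1)] by (force simp: l_def)
    then show ?thesis using sigmaI_maps_initial_segment[OF J] by blast
  qed
  ultimately show ?thesis using that by fastforce
qed

lemma ncomp_ominus_le_sigmaI_term:
  fixes G :: "nat \<Rightarrow> graph" and J :: "nat set" and m :: nat
  defines "L \<equiv> map (\<lambda>k. G (sigmaI J k)) [1..<m+1]"
  assumes J: "finite J" "0 \<notin> J" and i: "i \<in> J" "i \<le> m" and G: "path_subgraph (G i)"
  shows "\<exists>l<m. sigmaI J (Suc l) = i \<and>
    ncomp (ominus (G i) (\<Union>k\<in>{1..<i}. G k)) \<le> ncomp (ominus (L ! l) (\<Union>k<l. L ! k))"
proof -
  obtain l where l: "l < i" "sigmaI J (Suc l) = i" "sigmaI J ` {1..l} \<subseteq> {1..<i}"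
    using sigmaI_predecessor[OF J i(1)] .
  have L_nth: "L ! k = G (sigmaI J (Suc k))" if "k < m" for k
    using that by (simp add: L_def nth_upt del: upt_Suc)
  have "(\<Union>k<l. L ! k) \<subseteq> (\<Union>k\<in>{1..<i}. G k)"
    using l i(2) L_nth by fastforce
  then have "ncomp (ominus (G i) (\<Union>k\<in>{1..<i}. G k)) \<le> ncomp (ominus (L ! l) (\<Union>k<l. L ! k))"
    using l i(2) L_nth ncomp_ominus_antimono path_subgraph_finite[OF G] path_subgraph_card_edge[OF G]
    by simp
  moreover have "l < m" using l i(2) by simp
  ultimately show ?thesis using l(2) by blast
qed

theorem lemma5p3:
  fixes m j :: nat and I :: "nat set" and G :: "nat \<Rightarrow> graph"
  assumes "\<forall>i\<in>{1..m}. path_subgraph (G i)"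
    and "I \<subseteq> {1..m}" and "m \<in> I"
    and "j \<in> {1..m}"
  shows "vecDelta (map (\<lambda>k. G (sigmaI (tildeI I j) k)) [1..<m+1])
           \<ge> (\<Sum>i\<in>I. ncomp (ominus (G i) (\<Union>k\<in>{1..<i}. G k)))"
proof -
  define J where "J = tildeI I j"
  define L where "L = map (\<lambda>k. G (sigmaI J k)) [1..<m+1]"
  have len: "length L = m" by (simp add: L_def)
  have fin: "finite I" using assms(2) finite_subset by blast
  have J: "finite J" "0 \<notin> J" "I \<subseteq> J"
    using fin assms(2) unfolding J_def tildeI_def by auto
  have term_bound: "\<exists>l\<in>{..<m}. sigmaI J (Suc l) = i \<and>
      ncomp (ominus (G i) (\<Union>k\<in>{1..<i}. G k)) \<le> ncomp (ominus (L ! l) (\<Union>k<l. L ! k))"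
    if "i \<in> I" for i
  proof -
    have "i \<in> J" "i \<le> m" "path_subgraph (G i)" using that J(3) assms(1,2) by auto
    from ncomp_ominus_le_sigmaI_term[where G = G and m = m, OF J(1,2) this]
    show ?thesis unfolding L_def by auto
  qed
  have "(\<Sum>i\<in>I. ncomp (ominus (G i) (\<Union>k\<in>{1..<i}. G k)))
      \<le> (\<Sum>l<length L. ncomp (ominus (L ! l) (\<Union>k<l. L ! k)))"
    by (rule sum_le_included[where i = "\<lambda>l. sigmaI J (Suc l)"]) (use fin term_bound len in auto)
  then show ?thesis unfolding J_def[symmetric] L_def[symmetric] vecDelta_def .
qed

end
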